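(* Let $r\ge0$, $\eta\in\mathbb{R}^d$, $l\in\mathbb{R}$, and let $M_{e^{iy\cdot\eta+i\omega l}}$ denote the operator of multiplication of a function $u(y,\omega)$ on $\mathbb{R}^d\times\mathbb{R}$ by $e^{iy\cdot\eta+i\omega l}$. Then, with an implicit constant independent of $\varepsilon\in(0,1]$, $\gamma\ge1$, $\eta$, $l$, $$\|\Lambda^r_DM_{e^{iy\cdot\eta+i\omega l}}u\|_0\lesssim\|\Lambda^r_Du\|_0+\langle\eta\rangle^r\|u\|_0+\Big\langle\frac{l}{\varepsilon}\Big\rangle^r\|u\|_0 .$$
   Context: Fix $\beta\in\mathbb{R}^d\setminus\{0\}$, $\varepsilon\in(0,1]$, $\gamma\ge1$. With Fourier variables $(\xi,k)$ dual to $(y,\omega)$, $X=\xi+k\beta/\varepsilon$ and $\Lambda^r_D$ is the Fourier multiplier with symbol $(|X|^2+\gamma^2)^{r/2}$. $\|\cdot\|_0$ is the $L^2(\mathbb{R}^{d+1})$ norm, and $\langle a\rangle=(1+|a|^2)^{1/2}$. *)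

theory Defs
  imports "HOL-Analysis.Analysis"
begin

text \<open>Functions u(y,omega) on R^d x R are modelled as maps 'a \<times> real \<Rightarrow> complex,
  with 'a a Euclidean space of dimension d = DIM('a).\<close>

definition fourier :: "('a::euclidean_space \<times> real \<Rightarrow> complex) \<Rightarrow> 'a \<times> real \<Rightarrow> complex" where
  "fourier u = (\<lambda>(\<xi>, k). integral\<^sup>L lborel
      (\<lambda>(y, \<omega>). cis (- (y \<bullet> \<xi> + \<omega> * k)) * u (y, \<omega>)))"

text \<open>Symbol of Lambda^r_D: (|X|^2 + gamma^2)^(r/2), X = xi + k beta / eps.\<close>
definition lam_symbol :: "'a::euclidean_space \<Rightarrow> real \<Rightarrow> real \<Rightarrow> real \<Rightarrow> 'a \<times> real \<Rightarrow> real" where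
  "lam_symbol \<beta> \<epsilon> \<gamma> r = (\<lambda>(\<xi>, k). ((norm (\<xi> + (k / \<epsilon>) *\<^sub>R \<beta>))\<^sup>2 + \<gamma>\<^sup>2) powr (r / 2))"

definition lam_integrand :: "'a::euclidean_space \<Rightarrow> real \<Rightarrow> real \<Rightarrow> real \<Rightarrow> ('a \<times> real \<Rightarrow> complex) \<Rightarrow> 'a \<times> real \<Rightarrow> real" where
  "lam_integrand \<beta> \<epsilon> \<gamma> r u = (\<lambda>z. (lam_symbol \<beta> \<epsilon> \<gamma> r z * cmod (fourier u z))\<^sup>2)"

text \<open>||Lambda^r_D u||_0, via Plancherel: (2 pi)^(-(d+1)/2) || symbol * fourier u ||_{L2}.\<close>
definition lam_norm :: "'a::euclidean_space \<Rightarrow> real \<Rightarrow> real \<Rightarrow> real \<Rightarrow> ('a \<times> real \<Rightarrow> complex) \<Rightarrow> real" where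
  "lam_norm \<beta> \<epsilon> \<gamma> r u = (2 * pi) powr (- (real DIM('a) + 1) / 2)
      * sqrt (integral\<^sup>L lborel (lam_integrand \<beta> \<epsilon> \<gamma> r u))"

definition L2_norm0 :: "('a::euclidean_space \<times> real \<Rightarrow> complex) \<Rightarrow> real" where
  "L2_norm0 u = sqrt (integral\<^sup>L lborel (\<lambda>z. (cmod (u z))\<^sup>2))"

definition mult_exp :: "'a::euclidean_space \<Rightarrow> real \<Rightarrow> ('a \<times> real \<Rightarrow> complex) \<Rightarrow> 'a \<times> real \<Rightarrow> complex" where
  "mult_exp \<eta> l u = (\<lambda>(y, \<omega>). cis (y \<bullet> \<eta> + \<omega> * l) * u (y, \<omega>))"

definition jbr :: "real \<Rightarrow> real" where
  "jbr a = sqrt (1 + a\<^sup>2)"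

end

(*
  Multiplication by e^(i(y.eta + omega l)) translates the Fourier transform by s = (eta, l), so
  after the change of variables zeta -> s + zeta the claim compares the symbol at s + zeta with the
  symbol at zeta. In the variable X = xi + k beta/eps the translation is by eta + (l/eps) beta, and
  |X + e + v|^2 + gamma^2 <= 3 ((|X|^2 + gamma^2) + <e>^2 + <v>^2) gives, with B = max 1 |beta|,
    Lambda(s + zeta)^2 <= 9^r (Lambda(zeta)^2 + <eta>^(2r) + B^(2r) <l/eps>^(2r)).
  Integrating against |u^|^2 leaves the term (<eta>^(2r) + B^(2r) <l/eps>^(2r)) * int |u^|^2, and
  Plancherel's inequality int |u^|^2 <= (2 pi)^(d+1) int |u|^2 turns it into the L^2 terms; the
  constant is 3^r B^r.

  Since u is only assumed to be in L^1 and L^2, Plancherel's inequality is proved directly: damping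
  by a Gaussian in xi turns int |u^|^2 exp(-delta^2 |xi|^2 / 2) into a double integral of
  u(x) cnj(u(y)) against a Gaussian kernel in x - y, which 2ab <= a^2 + b^2 bounds by
  (2 pi)^(d+1) int |u|^2; Fatou's lemma then lets delta -> 0.
*)

theory Submission
  imports Defs "HOL-Probability.Characteristic_Functions"
begin

section \<open>Lebesgue integrals on Euclidean spaces\<close>

lemma borel_measurable_cis [measurable (raw)]:
  "f \<in> borel_measurable M \<Longrightarrow> (\<lambda>x. cis (f x)) \<in> borel_measurable M"
  by (rule borel_measurable_continuous_on[where f=cis]) (intro continuous_intros)

lemma borel_measurable_cnj [measurable (raw)]:
  "f \<in> borel_measurable M \<Longrightarrow> (\<lambda>x. cnj (f x)) \<in> borel_measurable M"
  by (rule borel_measurable_continuous_on[where f=cnj]) (intro continuous_intros)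

lemma cis_sum: "cis (sum f A) = (\<Prod>a\<in>A. cis (f a))"
  by (induct A rule: infinite_finite_induct) (auto simp: cis_mult[symmetric])

lemma norm_integral_le_nn_integral:
  fixes f :: "'b \<Rightarrow> 'c::{banach, second_countable_topology}"
  shows "ennreal (norm (integral\<^sup>L M f)) \<le> (\<integral>\<^sup>+ x. ennreal (norm (f x)) \<partial>M)"
  by (cases "integrable M f") (simp_all add: integral_norm_bound_ennreal not_integrable_integral_eq)

lemma nn_integral_lborel_translate:
  fixes f :: "'b::euclidean_space \<Rightarrow> ennreal"
  assumes [measurable]: "f \<in> borel_measurable borel"
  shows "(\<integral>\<^sup>+ y. f (c + y) \<partial>lborel) = (\<integral>\<^sup>+ y. f y \<partial>lborel)"
  by (subst (2) lborel_distr_plus[symmetric, of c]) (simp add: nn_integral_distr)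

lemma
  fixes f :: "'b::euclidean_space \<Rightarrow> real"
  assumes [measurable]: "f \<in> borel_measurable borel"
  shows integrable_lborel_translate_iff: "integrable lborel (\<lambda>y. f (c + y)) \<longleftrightarrow> integrable lborel f"
    and integral_lborel_translate: "(\<integral>y. f (c + y) \<partial>lborel) = (\<integral>y. f y \<partial>lborel)"
proof -
  show "integrable lborel (\<lambda>y. f (c + y)) \<longleftrightarrow> integrable lborel f"
    by (subst (2) lborel_distr_plus[symmetric, of c]) (simp add: integrable_distr_eq)
  show "(\<integral>y. f (c + y) \<partial>lborel) = (\<integral>y. f y \<partial>lborel)"
    by (subst (2) lborel_distr_plus[symmetric, of c]) (simp add: integral_distr)
qed

lemma integrable_lborel_tensor:
  fixes F :: "'b::euclidean_space \<Rightarrow> 'c::{real_normed_field, banach, second_countable_topology}"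
    and G :: "'d::euclidean_space \<Rightarrow> 'c"
  assumes F: "integrable lborel F" and G: "integrable lborel G"
  shows "integrable lborel (\<lambda>z. F (fst z) * G (snd z))"
  unfolding lborel_prod[symmetric]
proof (subst integrable_iff_bounded, intro conjI)
  have [measurable]: "F \<in> borel_measurable borel" "G \<in> borel_measurable borel"
    using F G by auto
  show "(\<lambda>z. F (fst z) * G (snd z)) \<in> borel_measurable (lborel \<Otimes>\<^sub>M lborel)"
    by measurable
  have "(\<integral>\<^sup>+ z. ennreal (norm (F (fst z) * G (snd z))) \<partial>(lborel \<Otimes>\<^sub>M lborel))
      = (\<integral>\<^sup>+ x. \<integral>\<^sup>+ y. ennreal (norm (F x)) * ennreal (norm (G y)) \<partial>lborel \<partial>lborel)"
    by (subst lborel.nn_integral_fst[symmetric]) (auto simp: norm_mult ennreal_mult intro!: nn_integral_cong)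
  also have "\<dots> = (\<integral>\<^sup>+ x. ennreal (norm (F x)) \<partial>lborel) * (\<integral>\<^sup>+ y. ennreal (norm (G y)) \<partial>lborel)"
    by (simp add: nn_integral_cmult nn_integral_multc)
  also have "\<dots> < \<infinity>"
    using F G by (simp add: integrable_iff_bounded ennreal_mult_less_top)
  finally show "(\<integral>\<^sup>+ z. ennreal (norm (F (fst z) * G (snd z))) \<partial>(lborel \<Otimes>\<^sub>M lborel)) < \<infinity>" .
qed

lemma integral_lborel_tensor:
  fixes F :: "'b::euclidean_space \<Rightarrow> 'c::{real_normed_field, banach, second_countable_topology}"
    and G :: "'d::euclidean_space \<Rightarrow> 'c"
  assumes F: "integrable lborel F" and G: "integrable lborel G"
  shows "(\<integral>z. F (fst z) * G (snd z) \<partial>lborel) = integral\<^sup>L lborel F * integral\<^sup>L lborel G"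
  using lborel_pair.integral_fst'[OF integrable_lborel_tensor[OF F G, folded lborel_prod]]
  by (simp add: lborel_prod)

lemma integral_lborel_prod_Basis:
  fixes f :: "'b::euclidean_space \<Rightarrow> real \<Rightarrow> 'c::{real_normed_field, banach, second_countable_topology}"
  assumes int: "\<And>b. b \<in> Basis \<Longrightarrow> integrable lborel (f b)"
  shows "(\<integral>x. (\<Prod>b\<in>Basis. f b (x \<bullet> b)) \<partial>(lborel::'b measure)) = (\<Prod>b\<in>Basis. integral\<^sup>L lborel (f b))"
proof -
  interpret P: product_sigma_finite "\<lambda>_::'b. lborel::real measure"
    by (simp add: product_sigma_finite_def sigma_finite_lborel)
  have "(\<lambda>x. \<Prod>b\<in>Basis. f b (x \<bullet> b)) \<in> borel_measurable (borel::'b measure)"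
    using int by (intro borel_measurable_prod) (auto intro: measurable_compose[OF _ borel_measurable_integrable])
  then have "(\<integral>x. (\<Prod>b\<in>Basis. f b (x \<bullet> b)) \<partial>(lborel::'b measure))
     = (\<integral>x. (\<Prod>b\<in>Basis. f b ((\<Sum>b'\<in>Basis. x b' *\<^sub>R b') \<bullet> b)) \<partial>(\<Pi>\<^sub>M b\<in>Basis. lborel))"
    by (subst lborel_eq) (simp add: integral_distr)
  also have "\<dots> = (\<integral>x. (\<Prod>b\<in>Basis. f b (x b)) \<partial>(\<Pi>\<^sub>M b\<in>Basis. lborel))"
    by (intro Bochner_Integration.integral_cong prod.cong refl)
       (simp add: inner_sum_left inner_Basis if_distrib cong: if_cong)
  also have "\<dots> = (\<Prod>b\<in>Basis. integral\<^sup>L lborel (f b))"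
    by (rule P.product_integral_prod) (simp_all add: int)
  finally show ?thesis .
qed

section \<open>Gaussians\<close>

lemma fourier_std_gaussian:
  "(\<integral>s. cis (- (t * s)) * exp (- s\<^sup>2 / 2) \<partial>lborel) = complex_of_real (sqrt (2 * pi) * exp (- t\<^sup>2 / 2))"
proof -
  have "(\<lambda>s. std_normal_density s *\<^sub>R iexp (-t * s))
      = (\<lambda>s. complex_of_real (1 / sqrt (2 * pi)) * (cis (- (t * s)) * exp (- s\<^sup>2 / 2)))"
    by (auto simp: std_normal_density_def cis_conv_exp scaleR_conv_of_real mult_ac)
  moreover have "char std_normal_distribution (-t) = (\<integral>s. std_normal_density s *\<^sub>R iexp (-t * s) \<partial>lborel)"
    unfolding char_def by (subst integral_density) (auto simp: normal_density_nonneg)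
  ultimately have "complex_of_real (1 / sqrt (2 * pi)) * (\<integral>s. cis (- (t * s)) * exp (- s\<^sup>2 / 2) \<partial>lborel)
      = exp (- t\<^sup>2 / 2)"
    by (simp add: char_std_normal_distribution)
  then show ?thesis
    by (simp add: field_simps)
qed

lemma integrable_gaussian_real:
  assumes "c \<noteq> 0"
  shows "integrable lborel (\<lambda>s::real. exp (- (c * s)\<^sup>2 / 2))"
proof -
  have "integrable lborel (\<lambda>s. sqrt (2 * pi) * (std_normal_density s * s ^ 0))"
    using integrable_std_normal_moment[of 0] by simp
  then have "integrable lborel (\<lambda>s::real. exp (- s\<^sup>2 / 2))"
    by (simp add: std_normal_density_def)
  from lborel_integrable_real_affine[OF this assms, of 0] show ?thesis
    by simp
qed

lemma fourier_gaussian_real: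
  assumes "\<delta> > 0"
  shows "(\<integral>s. cis (- (t * s)) * exp (- (\<delta> * s)\<^sup>2 / 2) \<partial>lborel)
    = complex_of_real (sqrt (2 * pi) / \<delta> * exp (- (t / \<delta>)\<^sup>2 / 2))"
proof -
  have "(\<integral>s. cis (- (t * s)) * exp (- (\<delta> * s)\<^sup>2 / 2) \<partial>lborel)
     = \<bar>1 / \<delta>\<bar> *\<^sub>R (\<integral>s. cis (- (t * (0 + 1 / \<delta> * s))) * exp (- (\<delta> * (0 + 1 / \<delta> * s))\<^sup>2 / 2) \<partial>lborel)"
    using assms by (intro lborel_integral_real_affine) simp
  also have "(\<lambda>s. cis (- (t * (0 + 1 / \<delta> * s))) * exp (- (\<delta> * (0 + 1 / \<delta> * s))\<^sup>2 / 2))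
      = (\<lambda>s. cis (- ((t / \<delta>) * s)) * exp (- s\<^sup>2 / 2))"
    using assms by (auto simp: field_simps)
  also have "(\<integral>s. cis (- ((t / \<delta>) * s)) * exp (- s\<^sup>2 / 2) \<partial>lborel)
      = complex_of_real (sqrt (2 * pi) * exp (- (t / \<delta>)\<^sup>2 / 2))"
    by (rule fourier_std_gaussian)
  finally show ?thesis
    using assms by (simp add: scaleR_conv_of_real)
qed

lemma nn_integral_gaussian_real:
  assumes "\<delta> > 0"
  shows "(\<integral>\<^sup>+ s. exp (- (\<delta> * s)\<^sup>2 / 2) \<partial>lborel) = ennreal (sqrt (2 * pi) / \<delta>)"
proof -
  have "complex_of_real (\<integral>s. exp (- (\<delta> * s)\<^sup>2 / 2) \<partial>lborel) = sqrt (2 * pi) / \<delta>"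
    using fourier_gaussian_real[OF assms, of 0] by simp
  then have "(\<integral>s. exp (- (\<delta> * s)\<^sup>2 / 2) \<partial>lborel) = sqrt (2 * pi) / \<delta>"
    using of_real_eq_iff by blast
  with integrable_gaussian_real[of \<delta>] assms show ?thesis
    by (subst nn_integral_eq_integral) simp_all
qed

definition gaussian :: "real \<Rightarrow> 'b::real_normed_vector \<Rightarrow> real" where
  "gaussian \<delta> x = exp (- (\<delta> * norm x)\<^sup>2 / 2)"

lemma gaussian_nonneg [simp]: "0 \<le> gaussian \<delta> x"
  by (simp add: gaussian_def)

lemma gaussian_minus [simp]: "gaussian \<delta> (- x) = gaussian \<delta> x"
  by (simp add: gaussian_def)

lemma gaussian_zero [simp]: "gaussian 0 x = 1"
  by (simp add: gaussian_def)

lemma borel_measurable_gaussian [measurable]: "gaussian \<delta> \<in> borel_measurable borel"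
  unfolding gaussian_def by measurable

lemma gaussian_prod_Basis:
  "gaussian \<delta> (x::'b::euclidean_space) = (\<Prod>b\<in>Basis. exp (- (\<delta> * (x \<bullet> b))\<^sup>2 / 2))"
proof -
  have "(norm x)\<^sup>2 = (\<Sum>b\<in>Basis. (x \<bullet> b)\<^sup>2)"
    unfolding power2_norm_eq_inner euclidean_inner[of x x] by (simp add: power2_eq_square)
  then have "(\<delta> * norm x)\<^sup>2 = (\<Sum>b\<in>Basis. (\<delta> * (x \<bullet> b))\<^sup>2)"
    by (simp add: power_mult_distrib sum_distrib_left)
  then show ?thesis
    by (simp add: gaussian_def exp_sum[symmetric] sum_divide_distrib sum_negf)
qed

lemma nn_integral_gaussian:
  assumes "\<delta> > 0"
  shows "(\<integral>\<^sup>+ x. gaussian \<delta> x \<partial>(lborel::'b::euclidean_space measure)) = ennreal ((sqrt (2 * pi) / \<delta>) ^ DIM('b))"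
proof -
  have "(\<integral>\<^sup>+ x. gaussian \<delta> x \<partial>(lborel::'b measure))
      = (\<integral>\<^sup>+ x. (\<Prod>b\<in>Basis. (\<lambda>_ s. ennreal (exp (- (\<delta> * s)\<^sup>2 / 2))) b (x \<bullet> b)) \<partial>(lborel::'b measure))"
    by (intro nn_integral_cong) (simp add: gaussian_prod_Basis prod_ennreal)
  also have "\<dots> = (\<Prod>b\<in>(Basis::'b set). \<integral>\<^sup>+ s. exp (- (\<delta> * s)\<^sup>2 / 2) \<partial>lborel)"
    by (rule nn_integral_lborel_prod) auto
  also have "\<dots> = (\<Prod>b\<in>(Basis::'b set). ennreal (sqrt (2 * pi) / \<delta>))"
    by (simp only: nn_integral_gaussian_real[OF assms])
  finally show ?thesis
    using assms by (simp add: ennreal_power)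
qed

lemma integrable_gaussian:
  assumes "\<delta> > 0"
  shows "integrable lborel (gaussian \<delta> :: 'b::euclidean_space \<Rightarrow> real)"
  using nn_integral_gaussian[OF assms, where 'b='b] by (simp add: integrable_iff_bounded)

lemma fourier_gaussian:
  assumes "\<delta> > 0"
  shows "(\<integral>x. cis (- (z \<bullet> x)) * gaussian \<delta> x \<partial>(lborel::'b::euclidean_space measure))
        = complex_of_real ((sqrt (2 * pi) / \<delta>) ^ DIM('b) * gaussian (1 / \<delta>) z)"
proof -
  have "cis (- (z \<bullet> x)) * gaussian \<delta> x
      = (\<Prod>b\<in>Basis. cis (- ((z \<bullet> b) * (x \<bullet> b))) * exp (- (\<delta> * (x \<bullet> b))\<^sup>2 / 2))" for x :: 'b
    by (simp add: euclidean_inner[of z x] sum_negf[symmetric] cis_sum gaussian_prod_Basis prod.distrib)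
  then have "(\<integral>x. cis (- (z \<bullet> x)) * gaussian \<delta> x \<partial>(lborel::'b measure))
     = (\<integral>x. (\<Prod>b\<in>Basis. (\<lambda>b s. cis (- ((z \<bullet> b) * s)) * exp (- (\<delta> * s)\<^sup>2 / 2)) b (x \<bullet> b)) \<partial>lborel)"
    by simp
  also have "\<dots> = (\<Prod>b\<in>Basis. \<integral>s. cis (- ((z \<bullet> b) * s)) * exp (- (\<delta> * s)\<^sup>2 / 2) \<partial>lborel)"
  proof (rule integral_lborel_prod_Basis)
    fix b :: 'b
    show "integrable lborel (\<lambda>s. cis (- ((z \<bullet> b) * s)) * exp (- (\<delta> * s)\<^sup>2 / 2))"
      using assms by (intro Bochner_Integration.integrable_bound[OF integrable_gaussian_real[of \<delta>]])
        (simp_all add: norm_mult)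
  qed
  also have "\<dots> = complex_of_real (\<Prod>b\<in>(Basis::'b set). sqrt (2 * pi) / \<delta> * exp (- ((z \<bullet> b) / \<delta>)\<^sup>2 / 2))"
    unfolding of_real_prod by (intro prod.cong refl fourier_gaussian_real[OF assms])
  also have "(\<Prod>b\<in>(Basis::'b set). sqrt (2 * pi) / \<delta> * exp (- ((z \<bullet> b) / \<delta>)\<^sup>2 / 2))
      = (sqrt (2 * pi) / \<delta>) ^ DIM('b) * gaussian (1 / \<delta>) z"
    by (simp only: prod.distrib prod_constant gaussian_prod_Basis) (simp add: field_simps)
  finally show ?thesis .
qed

section \<open>Plancherel's inequality\<close>

definition fourier_transform :: "('b::euclidean_space \<Rightarrow> complex) \<Rightarrow> 'b \<Rightarrow> complex" where
  "fourier_transform u \<xi> = (\<integral>x. cis (- (x \<bullet> \<xi>)) * u x \<partial>lborel)"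

lemma integrable_fourier_integrand:
  assumes "integrable lborel u"
  shows "integrable lborel (\<lambda>x. cis (- (x \<bullet> \<xi>)) * u x)"
proof (rule Bochner_Integration.integrable_bound[OF assms])
  have [measurable]: "u \<in> borel_measurable borel"
    using assms by auto
  show "(\<lambda>x. cis (- (x \<bullet> \<xi>)) * u x) \<in> borel_measurable lborel"
    by measurable
qed (simp add: norm_mult)

lemma norm_fourier_transform_le:
  "norm (fourier_transform u \<xi>) \<le> (\<integral>x. norm (u x) \<partial>lborel)"
  unfolding fourier_transform_def
  using integral_norm_bound[of lborel "\<lambda>x. cis (- (x \<bullet> \<xi>)) * u x"] by (simp add: norm_mult)

lemma borel_measurable_fourier_transform:
  assumes "integrable lborel u"
  shows "fourier_transform u \<in> borel_measurable borel"
proof -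
  have [measurable]: "u \<in> borel_measurable borel"
    using assms by auto
  show ?thesis
    unfolding fourier_transform_def[abs_def] by measurable
qed

lemma fourier_transform_modulation:
  "fourier_transform (\<lambda>x. cis (x \<bullet> s) * u x) \<xi> = fourier_transform u (\<xi> - s)"
  unfolding fourier_transform_def
  by (intro Bochner_Integration.integral_cong refl) (simp add: cis_mult inner_diff_right)

lemma nn_integral_convolution_kernel_le:
  fixes f h :: "'b::euclidean_space \<Rightarrow> real"
  assumes [measurable]: "f \<in> borel_measurable borel" "h \<in> borel_measurable borel"
    and h: "\<And>x. 0 \<le> h x" and h_even: "\<And>x. h (- x) = h x"
  shows "(\<integral>\<^sup>+ p. f (fst p) * f (snd p) * h (fst p - snd p) \<partial>lborel)
      \<le> (\<integral>\<^sup>+ x. h x \<partial>lborel) * (\<integral>\<^sup>+ x. (f x)\<^sup>2 \<partial>lborel)"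
proof -
  define H where "H = (\<integral>\<^sup>+ x. h x \<partial>lborel)"
  have h_left: "(\<integral>\<^sup>+ y. h (x - y) \<partial>lborel) = H" for x
    using nn_integral_lborel_translate[of "\<lambda>z. ennreal (h z)" "- x"] h_even[of "- x + y" for y]
    by (simp add: H_def)
  have h_right: "(\<integral>\<^sup>+ x. h (x - y) \<partial>lborel) = H" for y
    using nn_integral_lborel_translate[of "\<lambda>z. ennreal (h z)" "- y"] by (simp add: H_def)
  have "(\<integral>\<^sup>+ p. f (fst p) * f (snd p) * h (fst p - snd p) \<partial>(lborel \<Otimes>\<^sub>M lborel))
      \<le> (\<integral>\<^sup>+ p. (f (fst p))\<^sup>2 / 2 * h (fst p - snd p) + (f (snd p))\<^sup>2 / 2 * h (fst p - snd p) \<partial>(lborel \<Otimes>\<^sub>M lborel))"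
  proof (intro nn_integral_mono ennreal_leI)
    fix p :: "'b \<times> 'b"
    have "2 * f (fst p) * f (snd p) * h (fst p - snd p) \<le> ((f (fst p))\<^sup>2 + (f (snd p))\<^sup>2) * h (fst p - snd p)"
      using sum_squares_bound h by (rule mult_right_mono)
    then show "f (fst p) * f (snd p) * h (fst p - snd p)
        \<le> (f (fst p))\<^sup>2 / 2 * h (fst p - snd p) + (f (snd p))\<^sup>2 / 2 * h (fst p - snd p)"
      by (simp add: field_simps)
  qed
  also have "\<dots> = (\<integral>\<^sup>+ p. (f (fst p))\<^sup>2 / 2 * h (fst p - snd p) \<partial>(lborel \<Otimes>\<^sub>M lborel))
      + (\<integral>\<^sup>+ p. (f (snd p))\<^sup>2 / 2 * h (fst p - snd p) \<partial>(lborel \<Otimes>\<^sub>M lborel))"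
    using h by (subst nn_integral_add[symmetric]) (auto intro!: nn_integral_cong)
  also have "(\<integral>\<^sup>+ p. (f (fst p))\<^sup>2 / 2 * h (fst p - snd p) \<partial>(lborel \<Otimes>\<^sub>M lborel))
      = (\<integral>\<^sup>+ x. ennreal ((f x)\<^sup>2 / 2) * (\<integral>\<^sup>+ y. h (x - y) \<partial>lborel) \<partial>lborel)"
    using h
    by (subst lborel.nn_integral_fst[symmetric]) (auto simp: ennreal_mult[symmetric] nn_integral_cmult[symmetric] intro!: nn_integral_cong)
  also have "(\<integral>\<^sup>+ p. (f (snd p))\<^sup>2 / 2 * h (fst p - snd p) \<partial>(lborel \<Otimes>\<^sub>M lborel))
      = (\<integral>\<^sup>+ y. ennreal ((f y)\<^sup>2 / 2) * (\<integral>\<^sup>+ x. h (x - y) \<partial>lborel) \<partial>lborel)"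
    using h
    by (subst lborel_pair.nn_integral_snd[symmetric]) (auto simp: ennreal_mult[symmetric] nn_integral_cmult[symmetric] intro!: nn_integral_cong)
  also have "(\<integral>\<^sup>+ x. ennreal ((f x)\<^sup>2 / 2) * (\<integral>\<^sup>+ y. h (x - y) \<partial>lborel) \<partial>lborel)
      + (\<integral>\<^sup>+ y. ennreal ((f y)\<^sup>2 / 2) * (\<integral>\<^sup>+ x. h (x - y) \<partial>lborel) \<partial>lborel)
      = (\<integral>\<^sup>+ x. ennreal ((f x)\<^sup>2 / 2) + ennreal ((f x)\<^sup>2 / 2) \<partial>lborel) * H"
    by (simp add: h_left h_right nn_integral_multc nn_integral_add distrib_right)
  also have "\<dots> = H * (\<integral>\<^sup>+ x. (f x)\<^sup>2 \<partial>lborel)"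
    by (simp add: ennreal_plus[symmetric] mult.commute del: ennreal_plus)
  finally show ?thesis
    by (simp add: H_def lborel_prod)
qed

lemma fourier_transform_sq_gaussian:
  fixes u :: "'b::euclidean_space \<Rightarrow> complex"
  assumes u: "integrable lborel u" and \<delta>: "\<delta> > 0"
  shows "complex_of_real (\<integral>\<xi>. (cmod (fourier_transform u \<xi>))\<^sup>2 * gaussian \<delta> \<xi> \<partial>lborel)
    = (\<integral>p. u (fst p) * cnj (u (snd p)) * ((sqrt (2 * pi) / \<delta>) ^ DIM('b) * gaussian (1 / \<delta>) (fst p - snd p)) \<partial>lborel)"
proof -
  have [measurable]: "u \<in> borel_measurable borel"
    using u by auto
  define \<Phi> where "\<Phi> p \<xi> = u (fst p) * cnj (u (snd p)) * (cis (- ((fst p - snd p) \<bullet> \<xi>)) * gaussian \<delta> \<xi>)"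
    for p :: "'b \<times> 'b" and \<xi> :: 'b
  have "integrable (lborel \<Otimes>\<^sub>M lborel) (\<lambda>z. u (fst (fst z)) * cnj (u (snd (fst z))) * complex_of_real (gaussian \<delta> (snd z)))"
    using integrable_lborel_tensor[OF integrable_lborel_tensor[OF u integrable_cnj[OF u]]
        integrable_of_real[OF integrable_gaussian[OF \<delta>]]]
    by (simp add: lborel_prod)
  then have integrable_\<Phi>: "integrable (lborel \<Otimes>\<^sub>M lborel) (case_prod \<Phi>)"
    by (rule Bochner_Integration.integrable_bound)
       (auto simp: \<Phi>_def norm_mult lborel_prod[symmetric] case_prod_beta' split: prod.splits)
  have "(\<integral>p. \<Phi> p \<xi> \<partial>lborel) = complex_of_real ((cmod (fourier_transform u \<xi>))\<^sup>2 * gaussian \<delta> \<xi>)" for \<xi>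
  proof -
    define F where "F x = cis (- (x \<bullet> \<xi>)) * u x" for x
    have F: "integrable lborel F"
      unfolding F_def by (rule integrable_fourier_integrand[OF u])
    have "\<Phi> p \<xi> = F (fst p) * cnj (F (snd p)) * gaussian \<delta> \<xi>" for p
      by (simp add: \<Phi>_def F_def cis_cnj cis_mult inner_diff_left mult_ac)
    then have "(\<integral>p. \<Phi> p \<xi> \<partial>lborel) = integral\<^sup>L lborel F * cnj (integral\<^sup>L lborel F) * gaussian \<delta> \<xi>"
      by (simp add: integral_lborel_tensor[OF F integrable_cnj[OF F]])
    also have "\<dots> = complex_of_real ((cmod (fourier_transform u \<xi>))\<^sup>2 * gaussian \<delta> \<xi>)"
      by (simp add: F_def[abs_def] fourier_transform_def[symmetric] complex_norm_square[symmetric])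
    finally show ?thesis .
  qed
  then have "complex_of_real (\<integral>\<xi>. (cmod (fourier_transform u \<xi>))\<^sup>2 * gaussian \<delta> \<xi> \<partial>lborel)
      = (\<integral>\<xi>. \<integral>p. \<Phi> p \<xi> \<partial>lborel \<partial>lborel)"
    by (simp only: integral_complex_of_real)
  also have "\<dots> = (\<integral>p. \<integral>\<xi>. \<Phi> p \<xi> \<partial>lborel \<partial>lborel)"
    by (rule lborel_pair.Fubini_integral[OF integrable_\<Phi>])
  also have "\<dots> = (\<integral>p. u (fst p) * cnj (u (snd p)) * ((sqrt (2 * pi) / \<delta>) ^ DIM('b) * gaussian (1 / \<delta>) (fst p - snd p)) \<partial>lborel)"
    by (simp add: \<Phi>_def fourier_gaussian[OF \<delta>])
  finally show ?thesis .
qed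

lemma nn_integral_fourier_transform_sq_gaussian_le:
  fixes u :: "'b::euclidean_space \<Rightarrow> complex"
  assumes u: "integrable lborel u" and \<delta>: "\<delta> > 0"
  shows "(\<integral>\<^sup>+ \<xi>. (cmod (fourier_transform u \<xi>))\<^sup>2 * gaussian \<delta> \<xi> \<partial>lborel)
    \<le> (2 * pi) ^ DIM('b) * (\<integral>\<^sup>+ x. (cmod (u x))\<^sup>2 \<partial>lborel)"
proof -
  have [measurable]: "u \<in> borel_measurable borel" "fourier_transform u \<in> borel_measurable borel"
    using u borel_measurable_fourier_transform[OF u] by auto
  define h where "h z = (sqrt (2 * pi) / \<delta>) ^ DIM('b) * gaussian (1 / \<delta>) z" for z :: 'b
  have h_nonneg: "0 \<le> h z" and h_even: "h (- z) = h z" for z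
    using \<delta> by (simp_all add: h_def)
  have [measurable]: "h \<in> borel_measurable borel"
    unfolding h_def[abs_def] by measurable
  have "(\<integral>\<^sup>+ z. h z \<partial>lborel) = ennreal ((sqrt (2 * pi) / \<delta>) ^ DIM('b)) * (\<integral>\<^sup>+ z. gaussian (1 / \<delta>) z \<partial>(lborel::'b measure))"
    using \<delta> by (simp add: h_def ennreal_mult nn_integral_cmult)
  also have "\<dots> = ennreal ((sqrt (2 * pi) / \<delta>) ^ DIM('b) * (sqrt (2 * pi) / (1 / \<delta>)) ^ DIM('b))"
    using \<delta> by (simp add: nn_integral_gaussian ennreal_mult del: divide_divide_eq_right)
  also have "(sqrt (2 * pi) / \<delta>) ^ DIM('b) * (sqrt (2 * pi) / (1 / \<delta>)) ^ DIM('b) = (2 * pi) ^ DIM('b)"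
    using \<delta> by (simp only: power_mult_distrib[symmetric]) simp
  finally have integral_h: "(\<integral>\<^sup>+ z. h z \<partial>lborel) = (2 * pi) ^ DIM('b)" .
  have "integrable lborel (\<lambda>\<xi>. (cmod (fourier_transform u \<xi>))\<^sup>2 * gaussian \<delta> \<xi>)"
  proof (rule Bochner_Integration.integrable_bound)
    show "integrable lborel (\<lambda>\<xi>::'b. (\<integral>x. norm (u x) \<partial>lborel)\<^sup>2 * gaussian \<delta> \<xi>)"
      using integrable_gaussian[OF \<delta>, where 'b='b] by simp
    show "AE \<xi> in lborel. norm ((cmod (fourier_transform u \<xi>))\<^sup>2 * gaussian \<delta> \<xi>)
        \<le> norm ((\<integral>x. norm (u x) \<partial>lborel)\<^sup>2 * gaussian \<delta> \<xi>)"
      by (intro AE_I2) (simp add: mult_right_mono power_mono norm_fourier_transform_le)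
  qed simp
  then have "(\<integral>\<^sup>+ \<xi>. (cmod (fourier_transform u \<xi>))\<^sup>2 * gaussian \<delta> \<xi> \<partial>lborel)
      = ennreal (norm (complex_of_real (\<integral>\<xi>. (cmod (fourier_transform u \<xi>))\<^sup>2 * gaussian \<delta> \<xi> \<partial>lborel)))"
    by (simp add: nn_integral_eq_integral)
  also have "\<dots> \<le> (\<integral>\<^sup>+ p. cmod (u (fst p)) * cmod (u (snd p)) * h (fst p - snd p) \<partial>lborel)"
    unfolding fourier_transform_sq_gaussian[OF u \<delta>] h_def[symmetric]
    by (rule order_trans[OF norm_integral_le_nn_integral], rule nn_integral_mono)
       (simp add: norm_mult h_nonneg)
  also have "\<dots> \<le> (2 * pi) ^ DIM('b) * (\<integral>\<^sup>+ x. (cmod (u x))\<^sup>2 \<partial>lborel)"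
    using nn_integral_convolution_kernel_le[of "\<lambda>x. cmod (u x)" h] h_nonneg h_even
    by (simp add: integral_h)
  finally show ?thesis .
qed

lemma nn_integral_fourier_transform_sq_le:
  fixes u :: "'b::euclidean_space \<Rightarrow> complex"
  assumes u: "integrable lborel u"
  shows "(\<integral>\<^sup>+ \<xi>. (cmod (fourier_transform u \<xi>))\<^sup>2 \<partial>lborel) \<le> (2 * pi) ^ DIM('b) * (\<integral>\<^sup>+ x. (cmod (u x))\<^sup>2 \<partial>lborel)"
proof -
  have [measurable]: "fourier_transform u \<in> borel_measurable borel"
    by (rule borel_measurable_fourier_transform[OF u])
  define f where "f n \<xi> = ennreal ((cmod (fourier_transform u \<xi>))\<^sup>2 * gaussian (1 / Suc n) \<xi>)" for n \<xi>
  have "(\<lambda>n. gaussian (1 / Suc n) \<xi>) \<longlonglongrightarrow> gaussian 0 \<xi>" for \<xi> :: 'b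
    unfolding gaussian_def by (intro tendsto_intros LIMSEQ_Suc[OF lim_const_over_n]) simp
  then have "(\<lambda>n. f n \<xi>) \<longlonglongrightarrow> (cmod (fourier_transform u \<xi>))\<^sup>2 * gaussian 0 \<xi>" for \<xi>
    unfolding f_def by (intro tendsto_ennrealI tendsto_mult_left)
  then have "(\<integral>\<^sup>+ \<xi>. (cmod (fourier_transform u \<xi>))\<^sup>2 \<partial>lborel) = (\<integral>\<^sup>+ \<xi>. liminf (\<lambda>n. f n \<xi>) \<partial>lborel)"
    by (intro nn_integral_cong) (simp add: lim_imp_Liminf[symmetric])
  also have "\<dots> \<le> liminf (\<lambda>n. integral\<^sup>N lborel (f n))"
    by (rule nn_integral_liminf) (simp add: f_def)
  also have "\<dots> \<le> (2 * pi) ^ DIM('b) * (\<integral>\<^sup>+ x. (cmod (u x))\<^sup>2 \<partial>lborel)"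
    unfolding f_def
    by (intro Liminf_le always_eventually allI nn_integral_fourier_transform_sq_gaussian_le u) simp_all
  finally show ?thesis .
qed

lemma
  fixes u :: "'b::euclidean_space \<Rightarrow> complex"
  assumes u: "integrable lborel u" and u2: "integrable lborel (\<lambda>x. (cmod (u x))\<^sup>2)"
  shows integrable_fourier_transform_sq: "integrable lborel (\<lambda>\<xi>. (cmod (fourier_transform u \<xi>))\<^sup>2)"
    and integral_fourier_transform_sq_le:
      "(\<integral>\<xi>. (cmod (fourier_transform u \<xi>))\<^sup>2 \<partial>lborel) \<le> (2 * pi) ^ DIM('b) * (\<integral>x. (cmod (u x))\<^sup>2 \<partial>lborel)"
proof -
  have [measurable]: "fourier_transform u \<in> borel_measurable borel"
    by (rule borel_measurable_fourier_transform[OF u])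
  have U: "(\<integral>\<^sup>+ x. (cmod (u x))\<^sup>2 \<partial>lborel) = ennreal (\<integral>x. (cmod (u x))\<^sup>2 \<partial>lborel)"
    using u2 by (simp add: nn_integral_eq_integral)
  have bound: "(\<integral>\<^sup>+ \<xi>. (cmod (fourier_transform u \<xi>))\<^sup>2 \<partial>lborel)
      \<le> ennreal ((2 * pi) ^ DIM('b) * (\<integral>x. (cmod (u x))\<^sup>2 \<partial>lborel))"
    using nn_integral_fourier_transform_sq_le[OF u] by (simp add: U ennreal_mult)
  then show integrable: "integrable lborel (\<lambda>\<xi>. (cmod (fourier_transform u \<xi>))\<^sup>2)"
    unfolding integrable_iff_bounded by (auto intro: le_less_trans)
  show "(\<integral>\<xi>. (cmod (fourier_transform u \<xi>))\<^sup>2 \<partial>lborel) \<le> (2 * pi) ^ DIM('b) * (\<integral>x. (cmod (u x))\<^sup>2 \<partial>lborel)"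
    using bound integrable by (simp add: nn_integral_eq_integral ennreal_le_iff)
qed

section \<open>The modulation estimate\<close>

lemma powr_add3_le:
  fixes a b c r :: real
  assumes "0 \<le> a" "0 \<le> b" "0 \<le> c" "0 \<le> r"
  shows "(a + b + c) powr r \<le> 3 powr r * (a powr r + b powr r + c powr r)"
proof -
  define m where "m = max a (max b c)"
  have "(a + b + c) powr r \<le> (3 * m) powr r"
    using assms by (intro powr_mono2) (auto simp: m_def)
  also have "\<dots> = 3 powr r * m powr r"
    using assms by (simp add: m_def powr_mult)
  also have "m powr r \<le> a powr r + b powr r + c powr r"
    using assms by (auto simp: m_def max_def)
  finally show ?thesis
    by simp
qed

lemma norm_add3_sq_le:
  fixes x y z :: "'b::real_normed_vector"
  shows "(norm (x + y + z))\<^sup>2 \<le> 3 * ((norm x)\<^sup>2 + (norm y)\<^sup>2 + (norm z)\<^sup>2)"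
proof -
  have "norm (x + y + z) \<le> norm x + norm y + norm z"
    by (metis add_right_mono norm_triangle_ineq order_trans)
  then have "(norm (x + y + z))\<^sup>2 \<le> (norm x + norm y + norm z)\<^sup>2"
    by (intro power_mono) auto
  also have "\<dots> = (norm x)\<^sup>2 + (norm y)\<^sup>2 + (norm z)\<^sup>2
      + 2 * norm x * norm y + 2 * norm y * norm z + 2 * norm x * norm z"
    by (simp add: power2_eq_square algebra_simps)
  also have "\<dots> \<le> 3 * ((norm x)\<^sup>2 + (norm y)\<^sup>2 + (norm z)\<^sup>2)"
    using sum_squares_bound[of "norm x" "norm y"] sum_squares_bound[of "norm y" "norm z"]
      sum_squares_bound[of "norm x" "norm z"]
    unfolding distrib_left by linarith
  finally show ?thesis .
qed

lemma powr_norm_sq_add3_le: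
  fixes x y z :: "'b::real_normed_vector" and \<gamma> r :: real
  assumes "0 \<le> r"
  shows "((norm (x + y + z))\<^sup>2 + \<gamma>\<^sup>2) powr r
    \<le> 9 powr r * (((norm x)\<^sup>2 + \<gamma>\<^sup>2) powr r + (1 + (norm y)\<^sup>2) powr r + (1 + (norm z)\<^sup>2) powr r)"
proof -
  have "(norm (x + y + z))\<^sup>2 + \<gamma>\<^sup>2 \<le> 3 * (((norm x)\<^sup>2 + \<gamma>\<^sup>2) + (1 + (norm y)\<^sup>2) + (1 + (norm z)\<^sup>2))"
    using norm_add3_sq_le[of x y z] zero_le_power2[of \<gamma>] unfolding distrib_left by linarith
  then have "((norm (x + y + z))\<^sup>2 + \<gamma>\<^sup>2) powr r
      \<le> 3 powr r * (((norm x)\<^sup>2 + \<gamma>\<^sup>2) + (1 + (norm y)\<^sup>2) + (1 + (norm z)\<^sup>2)) powr r"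
    using assms by (subst powr_mult[symmetric]) (auto intro: powr_mono2)
  also have "\<dots> \<le> 3 powr r * (3 powr r
      * (((norm x)\<^sup>2 + \<gamma>\<^sup>2) powr r + (1 + (norm y)\<^sup>2) powr r + (1 + (norm z)\<^sup>2) powr r))"
    using assms by (intro mult_left_mono powr_add3_le) auto
  also have "\<dots> = 9 powr r * (((norm x)\<^sup>2 + \<gamma>\<^sup>2) powr r + (1 + (norm y)\<^sup>2) powr r + (1 + (norm z)\<^sup>2) powr r)"
    by (simp add: powr_mult[symmetric])
  finally show ?thesis .
qed

lemma fourier_eq_fourier_transform: "fourier u = fourier_transform u"
  by (auto simp: fun_eq_iff fourier_def fourier_transform_def inner_Pair split: prod.splits
      intro!: Bochner_Integration.integral_cong)

lemma fourier_mult_exp: "fourier (mult_exp \<eta> l u) z = fourier_transform u (z - (\<eta>, l))"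
proof -
  have "mult_exp \<eta> l u = (\<lambda>x. cis (x \<bullet> (\<eta>, l)) * u x)"
    by (auto simp: fun_eq_iff mult_exp_def inner_Pair)
  then show ?thesis
    by (simp add: fourier_eq_fourier_transform fourier_transform_modulation)
qed

lemma borel_measurable_lam_symbol [measurable]:
  "lam_symbol (\<beta>::'a::euclidean_space) \<epsilon> \<gamma> r \<in> borel_measurable borel"
proof -
  have "(\<lambda>z::'a \<times> real. ((norm (fst z + (snd z / \<epsilon>) *\<^sub>R \<beta>))\<^sup>2 + \<gamma>\<^sup>2) powr (r / 2))
      \<in> borel_measurable (borel \<Otimes>\<^sub>M borel)"
    by measurable
  then show ?thesis
    unfolding lam_symbol_def by (simp add: borel_prod case_prod_beta')
qed

lemma lam_symbol_sq:
  "(lam_symbol \<beta> \<epsilon> \<gamma> r (\<xi>, k))\<^sup>2 = ((norm (\<xi> + (k / \<epsilon>) *\<^sub>R \<beta>))\<^sup>2 + \<gamma>\<^sup>2) powr r"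
  by (simp add: lam_symbol_def power2_eq_square powr_add[symmetric])

lemma jbr_powr_sq: "(jbr a powr r)\<^sup>2 = (1 + a\<^sup>2) powr r"
  by (simp add: jbr_def powr_half_sqrt[symmetric] powr_powr power2_eq_square powr_add[symmetric])

lemma lam_symbol_shift_sq_le:
  assumes "0 < \<epsilon>" "0 \<le> r"
  shows "(lam_symbol \<beta> \<epsilon> \<gamma> r ((\<eta>, l) + w))\<^sup>2
    \<le> 9 powr r * ((lam_symbol \<beta> \<epsilon> \<gamma> r w)\<^sup>2 + (jbr (norm \<eta>) powr r)\<^sup>2
                   + (max 1 (norm \<beta>))\<^sup>2 powr r * (jbr (l / \<epsilon>) powr r)\<^sup>2)"
proof -
  obtain \<xi> k where w: "w = (\<xi>, k)"
    by (cases w)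
  define X where "X = \<xi> + (k / \<epsilon>) *\<^sub>R \<beta>"
  define v where "v = (l / \<epsilon>) *\<^sub>R \<beta>"
  define B where "B = max 1 (norm \<beta>)"
  have "norm v \<le> \<bar>l / \<epsilon>\<bar> * B"
    unfolding v_def B_def by (simp add: mult_left_mono divide_right_mono)
  then have "(norm v)\<^sup>2 \<le> (\<bar>l / \<epsilon>\<bar> * B)\<^sup>2"
    by (intro power_mono) auto
  then have "1 + (norm v)\<^sup>2 \<le> 1 + (l / \<epsilon>)\<^sup>2 * B\<^sup>2"
    by (simp only: power_mult_distrib power2_abs)
  also have "\<dots> \<le> B\<^sup>2 * (1 + (l / \<epsilon>)\<^sup>2)"
    using one_le_power[of B 2] by (simp add: B_def algebra_simps)
  finally have v_bound: "(1 + (norm v)\<^sup>2) powr r \<le> B\<^sup>2 powr r * (1 + (l / \<epsilon>)\<^sup>2) powr r"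
    using assms by (subst powr_mult[symmetric]) (auto intro: powr_mono2)
  have "(lam_symbol \<beta> \<epsilon> \<gamma> r ((\<eta>, l) + w))\<^sup>2 = ((norm (X + \<eta> + v))\<^sup>2 + \<gamma>\<^sup>2) powr r"
    using assms by (simp add: w X_def v_def lam_symbol_sq add_divide_distrib scaleR_add_left algebra_simps)
  also have "\<dots> \<le> 9 powr r * (((norm X)\<^sup>2 + \<gamma>\<^sup>2) powr r + (1 + (norm \<eta>)\<^sup>2) powr r + (1 + (norm v)\<^sup>2) powr r)"
    using assms(2) by (rule powr_norm_sq_add3_le)
  also have "\<dots> \<le> 9 powr r * (((norm X)\<^sup>2 + \<gamma>\<^sup>2) powr r + (1 + (norm \<eta>)\<^sup>2) powr r
      + B\<^sup>2 powr r * (1 + (l / \<epsilon>)\<^sup>2) powr r)"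
    using v_bound by (intro mult_left_mono add_left_mono) auto
  also have "\<dots> = 9 powr r * ((lam_symbol \<beta> \<epsilon> \<gamma> r w)\<^sup>2 + (jbr (norm \<eta>) powr r)\<^sup>2
                   + (max 1 (norm \<beta>))\<^sup>2 powr r * (jbr (l / \<epsilon>) powr r)\<^sup>2)"
    by (simp add: w X_def B_def lam_symbol_sq jbr_powr_sq)
  finally show ?thesis .
qed

lemma
  fixes \<beta> \<eta> :: "'a::euclidean_space" and l \<epsilon> \<gamma> r :: real and u :: "'a \<times> real \<Rightarrow> complex"
  assumes \<epsilon>: "0 < \<epsilon>" and r: "0 \<le> r"
    and u: "integrable lborel u" and u2: "integrable lborel (\<lambda>z. (cmod (u z))\<^sup>2)"
    and uI: "integrable lborel (lam_integrand \<beta> \<epsilon> \<gamma> r u)"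
  defines "c \<equiv> (jbr (norm \<eta>) powr r)\<^sup>2 + (max 1 (norm \<beta>))\<^sup>2 powr r * (jbr (l / \<epsilon>) powr r)\<^sup>2"
  shows integrable_lam_integrand_mult_exp: "integrable lborel (lam_integrand \<beta> \<epsilon> \<gamma> r (mult_exp \<eta> l u))"
    and integral_lam_integrand_mult_exp_le:
      "integral\<^sup>L lborel (lam_integrand \<beta> \<epsilon> \<gamma> r (mult_exp \<eta> l u))
        \<le> 9 powr r * (integral\<^sup>L lborel (lam_integrand \<beta> \<epsilon> \<gamma> r u)
                      + c * (\<integral>\<xi>. (cmod (fourier_transform u \<xi>))\<^sup>2 \<partial>lborel))"
proof -
  have [measurable]: "fourier_transform u \<in> borel_measurable borel"
    by (rule borel_measurable_fourier_transform[OF u])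
  define s where "s = (\<eta>, l)"
  define F where "F \<xi> = (cmod (fourier_transform u \<xi>))\<^sup>2" for \<xi>
  define G where "G \<xi> = 9 powr r * (lam_integrand \<beta> \<epsilon> \<gamma> r u \<xi> + c * F \<xi>)" for \<xi>
  have [measurable]: "lam_integrand \<beta> \<epsilon> \<gamma> r (mult_exp \<eta> l u) \<in> borel_measurable borel"
    unfolding lam_integrand_def fourier_mult_exp by measurable
  have shifted_le: "lam_integrand \<beta> \<epsilon> \<gamma> r (mult_exp \<eta> l u) (s + \<xi>) \<le> G \<xi>" for \<xi>
  proof -
    have "lam_integrand \<beta> \<epsilon> \<gamma> r (mult_exp \<eta> l u) (s + \<xi>) = (lam_symbol \<beta> \<epsilon> \<gamma> r (s + \<xi>))\<^sup>2 * F \<xi>"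
      by (simp add: lam_integrand_def fourier_mult_exp s_def F_def power_mult_distrib)
    also have "\<dots> \<le> 9 powr r * ((lam_symbol \<beta> \<epsilon> \<gamma> r \<xi>)\<^sup>2 + c) * F \<xi>"
      unfolding s_def c_def using lam_symbol_shift_sq_le[OF \<epsilon> r]
      by (intro mult_right_mono) (simp_all add: F_def add.assoc)
    also have "\<dots> = G \<xi>"
      by (simp add: G_def lam_integrand_def fourier_eq_fourier_transform F_def power_mult_distrib algebra_simps)
    finally show ?thesis .
  qed
  have G: "integrable lborel G"
    unfolding G_def F_def using uI integrable_fourier_transform_sq[OF u u2] by simp
  have shifted: "integrable lborel (\<lambda>\<xi>. lam_integrand \<beta> \<epsilon> \<gamma> r (mult_exp \<eta> l u) (s + \<xi>))"
  proof (rule Bochner_Integration.integrable_bound[OF G])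
    have "0 \<le> lam_integrand \<beta> \<epsilon> \<gamma> r (mult_exp \<eta> l u) (s + \<xi>)" for \<xi>
      by (simp add: lam_integrand_def)
    then show "AE \<xi> in lborel. norm (lam_integrand \<beta> \<epsilon> \<gamma> r (mult_exp \<eta> l u) (s + \<xi>)) \<le> norm (G \<xi>)"
      using shifted_le by (intro AE_I2) (simp add: abs_le_iff order_trans[OF shifted_le])
  qed simp
  then show "integrable lborel (lam_integrand \<beta> \<epsilon> \<gamma> r (mult_exp \<eta> l u))"
    by (simp add: integrable_lborel_translate_iff)
  have "integral\<^sup>L lborel (lam_integrand \<beta> \<epsilon> \<gamma> r (mult_exp \<eta> l u))
      = (\<integral>\<xi>. lam_integrand \<beta> \<epsilon> \<gamma> r (mult_exp \<eta> l u) (s + \<xi>) \<partial>lborel)"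
    by (simp add: integral_lborel_translate)
  also have "\<dots> \<le> integral\<^sup>L lborel G"
    by (intro integral_mono G shifted_le shifted)
  also have "\<dots> = 9 powr r * (integral\<^sup>L lborel (lam_integrand \<beta> \<epsilon> \<gamma> r u)
                      + c * (\<integral>\<xi>. (cmod (fourier_transform u \<xi>))\<^sup>2 \<partial>lborel))"
    unfolding G_def F_def using uI integrable_fourier_transform_sq[OF u u2] by simp
  finally show "integral\<^sup>L lborel (lam_integrand \<beta> \<epsilon> \<gamma> r (mult_exp \<eta> l u))
        \<le> 9 powr r * (integral\<^sup>L lborel (lam_integrand \<beta> \<epsilon> \<gamma> r u)
                      + c * (\<integral>\<xi>. (cmod (fourier_transform u \<xi>))\<^sup>2 \<partial>lborel))" .
qed

lemma lam_norm_sq: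
  fixes \<beta> :: "'a::euclidean_space"
  shows "(lam_norm \<beta> \<epsilon> \<gamma> r u)\<^sup>2 = integral\<^sup>L lborel (lam_integrand \<beta> \<epsilon> \<gamma> r u) / (2 * pi) ^ DIM('a \<times> real)"
proof -
  have "((2 * pi) powr (- (real DIM('a) + 1) / 2))\<^sup>2 = (2 * pi) powr (- (real DIM('a) + 1))"
    by (simp only: power2_eq_square powr_add[symmetric] field_sum_of_halves)
  also have "\<dots> = inverse ((2 * pi) ^ DIM('a \<times> real))"
    by (simp only: powr_minus powr_realpow[symmetric] pi_gt_zero mult_pos_pos zero_less_numeral
        DIM_prod DIM_real of_nat_add of_nat_1)
  finally have c: "((2 * pi) powr (- (real DIM('a) + 1) / 2))\<^sup>2 = inverse ((2 * pi) ^ DIM('a \<times> real))" .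
  have "0 \<le> integral\<^sup>L lborel (lam_integrand \<beta> \<epsilon> \<gamma> r u)"
    by (simp add: lam_integrand_def)
  then show ?thesis
    unfolding lam_norm_def power_mult_distrib c by (simp only: real_sqrt_pow2 divide_inverse_commute)
qed

lemma lam_norm_nonneg: "0 \<le> lam_norm \<beta> \<epsilon> \<gamma> r u"
  by (simp add: lam_norm_def lam_integrand_def)

lemma L2_norm0_sq: "(L2_norm0 u)\<^sup>2 = (\<integral>z. (cmod (u z))\<^sup>2 \<partial>lborel)"
  by (simp add: L2_norm0_def)

lemma lam_norm_mult_exp_sq_le:
  fixes \<beta> \<eta> :: "'a::euclidean_space" and l \<epsilon> \<gamma> r :: real and u :: "'a \<times> real \<Rightarrow> complex"
  assumes \<epsilon>: "0 < \<epsilon>" and r: "0 \<le> r"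
    and u: "integrable lborel u" and u2: "integrable lborel (\<lambda>z. (cmod (u z))\<^sup>2)"
    and uI: "integrable lborel (lam_integrand \<beta> \<epsilon> \<gamma> r u)"
  shows "(lam_norm \<beta> \<epsilon> \<gamma> r (mult_exp \<eta> l u))\<^sup>2
    \<le> 9 powr r * (max 1 (norm \<beta>))\<^sup>2 powr r * ((lam_norm \<beta> \<epsilon> \<gamma> r u)\<^sup>2
        + (jbr (norm \<eta>) powr r * L2_norm0 u)\<^sup>2 + (jbr (l / \<epsilon>) powr r * L2_norm0 u)\<^sup>2)"
proof -
  define N where "N = (2 * pi) ^ DIM('a \<times> real)"
  define B where "B = (max 1 (norm \<beta>))\<^sup>2 powr r"
  define J1 where "J1 = (jbr (norm \<eta>) powr r)\<^sup>2"
  define J2 where "J2 = (jbr (l / \<epsilon>) powr r)\<^sup>2"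
  define a where "a = lam_norm \<beta> \<epsilon> \<gamma> r u"
  define L where "L = L2_norm0 u"
  have N: "0 < N"
    by (simp add: N_def)
  have B: "1 \<le> B"
    unfolding B_def using r by (simp add: ge_one_powr_ge_zero)
  have J: "0 \<le> J1" "0 \<le> J2"
    by (simp_all add: J1_def J2_def)
  have le_B: "x \<le> B * x" if "0 \<le> x" for x
    using mult_right_mono[OF B that] by simp
  have "(lam_norm \<beta> \<epsilon> \<gamma> r (mult_exp \<eta> l u))\<^sup>2 = integral\<^sup>L lborel (lam_integrand \<beta> \<epsilon> \<gamma> r (mult_exp \<eta> l u)) / N"
    by (simp add: lam_norm_sq N_def)
  also have "\<dots> \<le> 9 powr r * (a\<^sup>2 * N + (J1 + B * J2) * (\<integral>\<xi>. (cmod (fourier_transform u \<xi>))\<^sup>2 \<partial>lborel)) / N"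
    using integral_lam_integrand_mult_exp_le[OF \<epsilon> r u u2 uI, of \<eta> l] N
    by (intro divide_right_mono) (simp_all add: a_def lam_norm_sq N_def J1_def J2_def B_def)
  also have "\<dots> \<le> 9 powr r * (a\<^sup>2 * N + (J1 + B * J2) * (N * L\<^sup>2)) / N"
    using integral_fourier_transform_sq_le[OF u u2] N B J
    by (intro divide_right_mono mult_left_mono add_left_mono) (simp_all add: L_def L2_norm0_sq N_def)
  also have "\<dots> = 9 powr r * (a\<^sup>2 + J1 * L\<^sup>2 + B * (J2 * L\<^sup>2))"
    using N by (simp add: field_simps)
  also have "\<dots> \<le> 9 powr r * (B * a\<^sup>2 + B * (J1 * L\<^sup>2) + B * (J2 * L\<^sup>2))"
    using B J by (intro mult_left_mono add_mono order_refl le_B) simp_all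
  also have "\<dots> = 9 powr r * B * (a\<^sup>2 + J1 * L\<^sup>2 + J2 * L\<^sup>2)"
    by (simp add: algebra_simps)
  finally show ?thesis
    by (simp add: B_def J1_def J2_def a_def L_def power_mult_distrib)
qed

lemma lam_norm_mult_exp_le:
  fixes \<beta> \<eta> :: "'a::euclidean_space" and l \<epsilon> \<gamma> r :: real and u :: "'a \<times> real \<Rightarrow> complex"
  assumes "0 < \<epsilon>" and "0 \<le> r"
    and "integrable lborel u" and "integrable lborel (\<lambda>z. (cmod (u z))\<^sup>2)"
    and "integrable lborel (lam_integrand \<beta> \<epsilon> \<gamma> r u)"
  shows "lam_norm \<beta> \<epsilon> \<gamma> r (mult_exp \<eta> l u)
    \<le> sqrt (9 powr r * (max 1 (norm \<beta>))\<^sup>2 powr r)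
      * (lam_norm \<beta> \<epsilon> \<gamma> r u + jbr (norm \<eta>) powr r * L2_norm0 u + jbr (l / \<epsilon>) powr r * L2_norm0 u)"
proof (rule power2_le_imp_le)
  define a where "a = lam_norm \<beta> \<epsilon> \<gamma> r u"
  define b where "b = jbr (norm \<eta>) powr r * L2_norm0 u"
  define c where "c = jbr (l / \<epsilon>) powr r * L2_norm0 u"
  have nonneg: "0 \<le> a" "0 \<le> b" "0 \<le> c"
    by (simp_all add: a_def b_def c_def lam_norm_nonneg L2_norm0_def)
  have "(lam_norm \<beta> \<epsilon> \<gamma> r (mult_exp \<eta> l u))\<^sup>2 \<le> 9 powr r * (max 1 (norm \<beta>))\<^sup>2 powr r * (a\<^sup>2 + b\<^sup>2 + c\<^sup>2)"
    unfolding a_def b_def c_def by (rule lam_norm_mult_exp_sq_le[OF assms])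
  also have "\<dots> \<le> (sqrt (9 powr r * (max 1 (norm \<beta>))\<^sup>2 powr r) * (a + b + c))\<^sup>2"
    using nonneg by (simp add: power_mult_distrib mult_left_mono power2_sum)
  finally show "(lam_norm \<beta> \<epsilon> \<gamma> r (mult_exp \<eta> l u))\<^sup>2 \<le> (sqrt (9 powr r * (max 1 (norm \<beta>))\<^sup>2 powr r) * (a + b + c))\<^sup>2" .
  show "0 \<le> sqrt (9 powr r * (max 1 (norm \<beta>))\<^sup>2 powr r) * (a + b + c)"
    using nonneg by simp
qed

theorem lemman40:
  fixes \<beta> :: "'a::euclidean_space" and r :: real
  assumes "\<beta> \<noteq> 0" and "r \<ge> 0"
  shows "\<exists>C>0. \<forall>\<epsilon> \<gamma> (\<eta>::'a) (l::real) (u :: 'a \<times> real \<Rightarrow> complex).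
           0 < \<epsilon> \<and> \<epsilon> \<le> 1 \<and> 1 \<le> \<gamma>
           \<and> integrable lborel u
           \<and> integrable lborel (\<lambda>z. (cmod (u z))\<^sup>2)
           \<and> integrable lborel (lam_integrand \<beta> \<epsilon> \<gamma> r u)
           \<longrightarrow> integrable lborel (lam_integrand \<beta> \<epsilon> \<gamma> r (mult_exp \<eta> l u))
             \<and> lam_norm \<beta> \<epsilon> \<gamma> r (mult_exp \<eta> l u)
                 \<le> C * (lam_norm \<beta> \<epsilon> \<gamma> r u + jbr (norm \<eta>) powr r * L2_norm0 u
                        + jbr (l / \<epsilon>) powr r * L2_norm0 u)"
proof (intro exI[of _ "sqrt (9 powr r * (max 1 (norm \<beta>))\<^sup>2 powr r)"] conjI allI impI)
  show "sqrt (9 powr r * (max 1 (norm \<beta>))\<^sup>2 powr r) > 0"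
    by simp
  fix \<epsilon> \<gamma> l :: real and \<eta> :: 'a and u :: "'a \<times> real \<Rightarrow> complex"
  assume "0 < \<epsilon> \<and> \<epsilon> \<le> 1 \<and> 1 \<le> \<gamma> \<and> integrable lborel u \<and> integrable lborel (\<lambda>z. (cmod (u z))\<^sup>2)
    \<and> integrable lborel (lam_integrand \<beta> \<epsilon> \<gamma> r u)"
  then have hyps: "0 < \<epsilon>" "0 \<le> r" "integrable lborel u" "integrable lborel (\<lambda>z. (cmod (u z))\<^sup>2)"
    "integrable lborel (lam_integrand \<beta> \<epsilon> \<gamma> r u)"
    using \<open>r \<ge> 0\<close> by auto
  show "integrable lborel (lam_integrand \<beta> \<epsilon> \<gamma> r (mult_exp \<eta> l u))"
    by (rule integrable_lam_integrand_mult_exp[OF hyps])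
  show "lam_norm \<beta> \<epsilon> \<gamma> r (mult_exp \<eta> l u)
      \<le> sqrt (9 powr r * (max 1 (norm \<beta>))\<^sup>2 powr r)
        * (lam_norm \<beta> \<epsilon> \<gamma> r u + jbr (norm \<eta>) powr r * L2_norm0 u + jbr (l / \<epsilon>) powr r * L2_norm0 u)"
    by (rule lam_norm_mult_exp_le[OF hyps])
qed

end
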